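(* Let $Y_n(\omega)=\{f_{l,n}(\omega)\}_{l=1}^{R_n}\subset\mathbb R^d$ ($n\in\mathbb N$) be as in the general framework, fix $\omega\in\Omega$ and $h:\mathbb N\to[0,\infty)$. Suppose there is $\gamma>1$ with $R_n\asymp\gamma^n$, and there exist $c>0$, $s>0$ with $\sum_{n:\,\omega\in B(c,s,n)}h(n)=\infty$. Then the set $\{x\in\mathbb R^d: x\in\bigcup_{l=1}^{R_n}B(f_{l,n}(\omega),(h(n)/R_n)^{1/d})$ for infinitely many $n\}$ has positive Lebesgue measure.
   Context: General framework: $\Omega$ a metric space, $\tilde X\subset\mathbb R^d$ compact, for each $n$ finitely many continuous $f_{l,n}:\Omega\to\tilde X$, $l=1,\ldots,R_n$. $T(Y,r)$ = maximal cardinality of an $r$-separated subset (distinct points at distance $>r$) of finite $Y$. $B(c,s,n)=\{\omega\in\Omega:T(Y_n(\omega),sR_n^{-1/d})/R_n>c\}$. *)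

theory Defs
  imports "HOL-Analysis.Analysis" "HOL-Library.Landau_Symbols"
begin

definition separated :: "real \<Rightarrow> 'b::metric_space set \<Rightarrow> bool" where
  "separated r S \<longleftrightarrow> (\<forall>x\<in>S. \<forall>y\<in>S. x \<noteq> y \<longrightarrow> dist x y > r)"

definition Tsep :: "'b::metric_space set \<Rightarrow> real \<Rightarrow> nat" where
  "Tsep Y r = Max {card S | S. S \<subseteq> Y \<and> separated r S}"

definition Yset :: "(nat \<Rightarrow> nat \<Rightarrow> 'a \<Rightarrow> 'b) \<Rightarrow> (nat \<Rightarrow> nat) \<Rightarrow> nat \<Rightarrow> 'a \<Rightarrow> 'b set" where
  "Yset f R n \<omega> = (\<lambda>l. f l n \<omega>) ` {1..R n}"

definition Bset :: "(nat \<Rightarrow> nat \<Rightarrow> 'a \<Rightarrow> 'b::euclidean_space) \<Rightarrow> (nat \<Rightarrow> nat) \<Rightarrow> real \<Rightarrow> real \<Rightarrow> nat \<Rightarrow> 'a set" where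
  "Bset f R c s n = {\<omega>. real (Tsep (Yset f R n \<omega>) (s * real (R n) powr (-1 / real DIM('b)))) / real (R n) > c}"

end

theory Submission
  imports Defs
begin

text \<open>
  Keep only the levels n with \<omega> \<in> B(c,s,n) beyond some N0 and cap h there at (s/2)^d; the
  resulting weights w still have divergent sum. At such a level Y_n contains a
  \<rho>_n-separated set S_n of more than c R_n points, \<rho>_n = s R_n^(-1/d), and the balls of
  radius r_n = (w_n/R_n)^(1/d) \<le> \<rho>_n/2 around S_n have total volume at least a constant
  times c w_n. A ball of level m meets at most 4^d ((r_m/\<rho>_n)^d + 1) balls of a level n \<ge> m,
  and since R_n grows geometrically this bounds the total pairwise overlap over a block of
  levels by a constant times (\<Sum> w_n)^2 as soon as \<Sum> w_n is large. The Chung-Erdos inequality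
  (\<Sum> |B_p|)^2 \<le> (\<Sum> |B_p \<inter> B_q|) |\<Union> B_p| then gives every tail union a measure at least
  \<delta> > 0, independently of where the tail starts; the tails decrease and have finite measure,
  so the limsup set has measure at least \<delta>.
\<close>

section \<open>Packing and overlaps of balls around separated sets\<close>

lemma measure_lebesgue_ball:
  fixes c :: "'a::euclidean_space"
  assumes "r \<ge> 0"
  shows "measure lebesgue (ball c r) = unit_ball_vol (DIM('a)) * r ^ DIM('a)"
proof -
  have "measure lebesgue (ball c r) = measure lborel (ball c r)"
    by (rule measure_completion) simp
  then show ?thesis using content_ball[of r c] assms by simp
qed

lemma card_separated_subset_ball:
  fixes Z :: "'a::euclidean_space set"
  assumes fin: "finite Z" and rho: "\<rho> > 0" and sep: "separated \<rho> Z"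
    and sub: "Z \<subseteq> ball y t" and t: "t \<ge> 0"
  shows "real (card Z) * (\<rho>/2) ^ DIM('a) \<le> (t + \<rho>/2) ^ DIM('a)"
proof -
  let ?d = "DIM('a)" and ?v = "unit_ball_vol (DIM('a))"
  have int: "integrable lebesgue (indicator (ball z r) :: 'a \<Rightarrow> real)" for z r
    using lmeasurable_ball by (auto intro!: integrable_real_indicator simp: fmeasurable_def)
  \<comment> \<open>the balls of radius \<rho>/2 around the points of Z are disjoint and lie in ball y (t + \<rho>/2)\<close>
  have disjoint: "(\<Sum>z\<in>Z. indicator (ball z (\<rho>/2)) x) \<le> (indicator (ball y (t + \<rho>/2)) x :: real)" for x
  proof -
    define Zx where "Zx = {z\<in>Z. x \<in> ball z (\<rho>/2)}"
    have eq: "(\<Sum>z\<in>Z. indicator (ball z (\<rho>/2)) x) = real (card Zx)"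
      using fin by (auto simp: Zx_def indicator_def sum.If_cases intro!: arg_cong[where f=card])
    have "finite Zx" using fin by (simp add: Zx_def)
    have "card Zx \<le> Suc 0"
      unfolding card_le_Suc0_iff_eq[OF \<open>finite Zx\<close>]
    proof (intro ballI, rule ccontr)
      fix a b assume a: "a \<in> Zx" and b: "b \<in> Zx" and "a \<noteq> b"
      then have "\<rho> < dist a b" using sep unfolding separated_def Zx_def by auto
      moreover have "dist a b \<le> dist a x + dist b x" by (metis dist_commute dist_triangle)
      ultimately show False using a b by (auto simp: Zx_def)
    qed
    moreover have "x \<in> ball y (t + \<rho>/2)" if "Zx \<noteq> {}"
    proof -
      obtain z where z: "z \<in> Z" "dist z x < \<rho>/2" using \<open>Zx \<noteq> {}\<close> by (auto simp: Zx_def)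
      have "dist y z < t" using sub z by auto
      then show ?thesis using z dist_triangle[of y x z] by simp
    qed
    ultimately show ?thesis using eq by (cases "Zx = {}") (auto simp: indicator_def)
  qed
  have "(\<Sum>z\<in>Z. measure lebesgue (ball z (\<rho>/2)))
      = integral\<^sup>L lebesgue (\<lambda>x. \<Sum>z\<in>Z. indicator (ball z (\<rho>/2)) x)"
    using Bochner_Integration.integral_sum[where I=Z and M=lebesgue, OF int] by simp
  also have "\<dots> \<le> integral\<^sup>L lebesgue (indicator (ball y (t + \<rho>/2)) :: 'a \<Rightarrow> real)"
    by (intro integral_mono disjoint int Bochner_Integration.integrable_sum)
  also have "\<dots> = measure lebesgue (ball y (t + \<rho>/2))" by simp
  finally have "(\<Sum>z\<in>Z. measure lebesgue (ball z (\<rho>/2))) \<le> measure lebesgue (ball y (t + \<rho>/2))" .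
  moreover have "measure lebesgue (ball z (\<rho>/2)) = ?v * (\<rho>/2) ^ ?d" for z :: 'a
    using rho by (intro measure_lebesgue_ball) simp
  moreover have "measure lebesgue (ball y (t + \<rho>/2)) = ?v * (t + \<rho>/2) ^ ?d"
    using rho t by (intro measure_lebesgue_ball) simp
  ultimately have "real (card Z) * (?v * (\<rho>/2) ^ ?d) \<le> ?v * (t + \<rho>/2) ^ ?d"
    by simp
  then show ?thesis by (simp add: mult.left_commute)
qed

lemma power_add_le_two_power:
  fixes a b :: real
  assumes "a \<ge> 0" "b \<ge> 0"
  shows "(a + b) ^ k \<le> 2 ^ k * (a ^ k + b ^ k)"
proof -
  have "(a + b) ^ k \<le> (2 * max a b) ^ k"
    using assms by (intro power_mono) auto
  also have "\<dots> = 2 ^ k * max a b ^ k" by (simp add: power_mult_distrib)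
  also have "max a b ^ k \<le> a ^ k + b ^ k"
    using assms by (cases "a \<le> b") (auto simp: max_def)
  then have "2 ^ k * max a b ^ k \<le> 2 ^ k * (a ^ k + b ^ k)" by simp
  finally show ?thesis .
qed

lemma card_separated_near_le:
  fixes Z :: "'a::euclidean_space set"
  assumes fin: "finite Z" and rho: "\<rho> > 0" and sep: "separated \<rho> Z"
    and r: "r \<ge> 0" and r': "0 \<le> r'" "r' \<le> \<rho>/2"
  shows "real (card {z\<in>Z. dist y z < r + r'}) \<le> 4 ^ DIM('a) * (r ^ DIM('a) / \<rho> ^ DIM('a) + 1)"
proof -
  let ?d = "DIM('a)" and ?Z = "{z\<in>Z. dist y z < r + r'}"
  have "separated \<rho> ?Z" using sep unfolding separated_def by auto
  then have "real (card ?Z) * (\<rho>/2) ^ ?d \<le> (r + r' + \<rho>/2) ^ ?d"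
    using fin rho r r' by (intro card_separated_subset_ball) auto
  also have "\<dots> \<le> (r + \<rho>) ^ ?d" using r' r rho by (intro power_mono) auto
  also have "\<dots> \<le> 2 ^ ?d * (r ^ ?d + \<rho> ^ ?d)" using r rho by (intro power_add_le_two_power) auto
  finally have "real (card ?Z) \<le> 2 ^ ?d * (r ^ ?d + \<rho> ^ ?d) / (\<rho> / 2) ^ ?d"
    using rho by (simp add: pos_le_divide_eq)
  also have "\<dots> = 4 ^ ?d * (r ^ ?d / \<rho> ^ ?d + 1)"
  proof -
    have "(4::real) ^ ?d = 2 ^ ?d * 2 ^ ?d" by (simp flip: power_mult_distrib)
    then show ?thesis using rho by (simp add: power_divide field_simps)
  qed
  finally show ?thesis .
qed

lemma sum_measure_inter_balls_le:
  fixes Y Z :: "'a::euclidean_space set"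
  assumes Y: "finite Y" and Z: "finite Z" and rho: "\<rho> > 0" and sep: "separated \<rho> Z"
    and r: "r \<ge> 0" and r': "0 \<le> r'" "r' \<le> \<rho>/2"
  shows "(\<Sum>y\<in>Y. \<Sum>z\<in>Z. measure lebesgue (ball y r \<inter> ball z r'))
    \<le> real (card Y) * (unit_ball_vol DIM('a) * r' ^ DIM('a)) * (4 ^ DIM('a) * (r ^ DIM('a) / \<rho> ^ DIM('a) + 1))"
proof -
  let ?d = "DIM('a)" and ?v = "unit_ball_vol (DIM('a)) * r' ^ DIM('a)"
  have "(\<Sum>z\<in>Z. measure lebesgue (ball y r \<inter> ball z r')) \<le> ?v * (4 ^ ?d * (r ^ ?d / \<rho> ^ ?d + 1))" for y
  proof -
    have "measure lebesgue (ball y r \<inter> ball z r') \<le> (if dist y z < r + r' then ?v else 0)" for z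
    proof (cases "dist y z < r + r'")
      case True
      have "measure lebesgue (ball y r \<inter> ball z r') \<le> measure lebesgue (ball z r')"
        by (intro measure_mono_fmeasurable) auto
      also have "\<dots> = ?v" using r'(1) by (rule measure_lebesgue_ball)
      finally show ?thesis using True by simp
    next
      case False
      then have "ball y r \<inter> ball z r' = {}"
        by (intro disjoint_ballI) simp
      then show ?thesis using False by simp
    qed
    then have "(\<Sum>z\<in>Z. measure lebesgue (ball y r \<inter> ball z r')) \<le> (\<Sum>z\<in>Z. if dist y z < r + r' then ?v else 0)"
      by (rule sum_mono)
    also have "\<dots> = ?v * real (card {z\<in>Z. dist y z < r + r'})"
      using Z by (simp add: sum.If_cases Int_def)
    also have "\<dots> \<le> ?v * (4 ^ ?d * (r ^ ?d / \<rho> ^ ?d + 1))"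
      using Z rho sep r r' by (intro mult_left_mono card_separated_near_le) auto
    finally show ?thesis .
  qed
  then have "(\<Sum>y\<in>Y. \<Sum>z\<in>Z. measure lebesgue (ball y r \<inter> ball z r'))
      \<le> (\<Sum>y\<in>Y. ?v * (4 ^ ?d * (r ^ ?d / \<rho> ^ ?d + 1)))"
    by (rule sum_mono)
  then show ?thesis by simp
qed

lemma sum_measure_inter_separated_balls_le:
  fixes S :: "'i::linorder \<Rightarrow> 'a::euclidean_space set"
  assumes J: "finite J" and fin: "\<And>n. n \<in> J \<Longrightarrow> finite (S n)"
    and sep: "\<And>n. n \<in> J \<Longrightarrow> separated (\<rho> n) (S n)" and rho: "\<And>n. n \<in> J \<Longrightarrow> \<rho> n > 0"
    and r: "\<And>n. n \<in> J \<Longrightarrow> 0 \<le> r n" "\<And>n. n \<in> J \<Longrightarrow> r n \<le> \<rho> n / 2"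
  shows "(\<Sum>p\<in>Sigma J S. \<Sum>q\<in>Sigma J S.
            measure lebesgue (ball (snd p) (r (fst p)) \<inter> ball (snd q) (r (fst q))))
    \<le> 2 * (\<Sum>m\<in>J. \<Sum>n\<in>J. if m \<le> n then real (card (S m)) * (unit_ball_vol DIM('a) * r n ^ DIM('a))
                                        * (4 ^ DIM('a) * (r m ^ DIM('a) / \<rho> n ^ DIM('a) + 1)) else 0)"
    (is "?Q \<le> 2 * (\<Sum>m\<in>J. \<Sum>n\<in>J. ?D m n)")
proof -
  define \<mu> where "\<mu> p q = measure lebesgue (ball (snd p) (r (fst p)) \<inter> ball (snd q) (r (fst q)))"
    for p q :: "'i \<times> 'a"
  define I where "I m n = (\<Sum>y\<in>S m. \<Sum>z\<in>S n. \<mu> (m, y) (n, z))" for m n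
  have row: "(\<Sum>q\<in>Sigma J S. g q) = (\<Sum>n\<in>J. \<Sum>z\<in>S n. g (n, z))" for g :: "'i \<times> 'a \<Rightarrow> real"
    using J fin by (subst sum.Sigma) (auto simp: split_def)
  have "?Q = (\<Sum>m\<in>J. \<Sum>y\<in>S m. \<Sum>n\<in>J. \<Sum>z\<in>S n. \<mu> (m, y) (n, z))"
    unfolding \<mu>_def row ..
  also have "\<dots> = (\<Sum>m\<in>J. \<Sum>n\<in>J. I m n)"
    unfolding I_def by (intro sum.cong refl sum.swap)
  also have "\<dots> \<le> (\<Sum>m\<in>J. \<Sum>n\<in>J. ?D m n + ?D n m)"
  proof (intro sum_mono)
    fix m n assume mn: "m \<in> J" "n \<in> J"
    have ID: "I m n \<le> ?D m n" if "m \<le> n" "m \<in> J" "n \<in> J" for m n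
      unfolding I_def \<mu>_def fst_conv snd_conv if_P[OF \<open>m \<le> n\<close>]
      using that fin sep rho r by (intro sum_measure_inter_balls_le) auto
    have D0: "?D m n \<ge> 0" if "m \<in> J" "n \<in> J" for m n
      using that r rho by (simp add: less_imp_le)
    show "I m n \<le> ?D m n + ?D n m"
    proof (cases "m \<le> n")
      case True then show ?thesis using ID[OF True mn] D0[OF mn(2,1)] by linarith
    next
      case False
      have "I m n = I n m" unfolding I_def \<mu>_def by (subst sum.swap) (simp add: Int_commute)
      moreover have "I n m \<le> ?D n m" using False mn by (intro ID) auto
      ultimately show ?thesis using D0[OF mn] by linarith
    qed
  qed
  also have "\<dots> = 2 * (\<Sum>m\<in>J. \<Sum>n\<in>J. ?D m n)"
    by (simp add: sum.distrib sum.swap[of "\<lambda>m n. ?D n m"])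
  finally show ?thesis .
qed

section \<open>The second moment inequality\<close>

lemma sum_measure_le_overlaps_union:
  fixes B :: "'p \<Rightarrow> 'a::euclidean_space set"
  assumes P: "finite P" and Bm: "\<And>p. p \<in> P \<Longrightarrow> B p \<in> lmeasurable" and L: "L > 0"
  shows "(\<Sum>p\<in>P. measure lebesgue (B p)) \<le>
     (\<Sum>p\<in>P. \<Sum>q\<in>P. measure lebesgue (B p \<inter> B q)) / (2*L) + L/2 * measure lebesgue (\<Union>p\<in>P. B p)"
proof -
  let ?U = "\<Union>p\<in>P. B p"
  have Um: "?U \<in> lmeasurable" using P Bm by (intro fmeasurable.finite_UN) auto
  have intB: "integrable lebesgue (indicator A :: 'a \<Rightarrow> real)" if "A \<in> lmeasurable" for A
    using that by (auto intro!: integrable_real_indicator simp: fmeasurable_def)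
  have BBm: "B p \<inter> B q \<in> lmeasurable" if "p \<in> P" "q \<in> P" for p q
    using Bm that by (intro fmeasurable.Int) auto
  define N where "N x = (\<Sum>p\<in>P. indicator (B p) x :: real)" for x
  define N2 where "N2 x = (\<Sum>p\<in>P. \<Sum>q\<in>P. indicator (B p \<inter> B q) x :: real)" for x
  have N2_eq: "N2 x = (N x)^2" for x
    unfolding N_def N2_def power2_eq_square sum_product indicator_inter_arith ..
  \<comment> \<open>AM-GM on the support of N: N \<le> N^2/(2L) + L/2\<close>
  have pointwise: "N x \<le> N2 x / (2*L) + L/2 * indicator ?U x" for x
  proof (cases "x \<in> ?U")
    case True
    have "0 \<le> (N x - L)^2" by simp
    then have "N x \<le> (N x)^2/(2*L) + L/2"
      using L by (simp add: field_simps power2_eq_square)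
    then show ?thesis using True N2_eq by simp
  next
    case False
    then have "N x = 0" by (auto simp: N_def indicator_def)
    moreover have "N2 x \<ge> 0" by (simp add: N2_eq)
    ultimately show ?thesis using False L by simp
  qed
  have intN2: "integrable lebesgue N2"
    unfolding N2_def using intB BBm by (intro Bochner_Integration.integrable_sum) auto
  have "(\<Sum>p\<in>P. measure lebesgue (B p)) = integral\<^sup>L lebesgue N"
    unfolding N_def using intB Bm by (simp add: Bochner_Integration.integral_sum)
  also have "\<dots> \<le> integral\<^sup>L lebesgue (\<lambda>x. N2 x / (2*L) + L/2 * indicator ?U x)"
    using pointwise intB Bm Um intN2 unfolding N_def
    by (intro integral_mono Bochner_Integration.integrable_sum integrable_add integrable_divide integrable_mult_right) auto
  also have "\<dots> = integral\<^sup>L lebesgue N2 / (2*L) + L/2 * measure lebesgue ?U"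
    using intN2 intB[OF Um] by simp
  also have "integral\<^sup>L lebesgue N2 = (\<Sum>p\<in>P. \<Sum>q\<in>P. measure lebesgue (B p \<inter> B q))"
    unfolding N2_def using intB BBm
    by (simp add: Bochner_Integration.integral_sum Bochner_Integration.integrable_sum)
  finally show ?thesis .
qed

lemma sum_measure_squared_le:
  fixes B :: "'p \<Rightarrow> 'a::euclidean_space set"
  assumes P: "finite P" and Bm: "\<And>p. p \<in> P \<Longrightarrow> B p \<in> lmeasurable"
  shows "(\<Sum>p\<in>P. measure lebesgue (B p))^2 \<le>
     (\<Sum>p\<in>P. \<Sum>q\<in>P. measure lebesgue (B p \<inter> B q)) * measure lebesgue (\<Union>p\<in>P. B p)"
    (is "?A^2 \<le> ?Q * ?U")
proof (cases "?A = 0")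
  case False
  have "?A \<le> ?Q"
  proof (intro sum_mono)
    fix p assume "p \<in> P"
    then show "measure lebesgue (B p) \<le> (\<Sum>q\<in>P. measure lebesgue (B p \<inter> B q))"
      using member_le_sum[of p P "\<lambda>q. measure lebesgue (B p \<inter> B q)"] P by simp
  qed
  moreover have "?A \<ge> 0" by (simp add: sum_nonneg)
  ultimately have A: "?A > 0" and Q: "?Q > 0" using False by linarith+
  have "?A \<le> ?Q / (2 * (?Q / ?A)) + (?Q / ?A) / 2 * ?U"
    using A Q by (intro sum_measure_le_overlaps_union P Bm divide_pos_pos)
  then have "?A \<le> ?A / 2 + ?Q * ?U / (2 * ?A)"
    using A Q by (simp add: field_simps)
  then show ?thesis using A by (simp add: field_simps power2_eq_square)
qed (simp add: sum_nonneg)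

section \<open>Measure of the balls over a finite block of levels\<close>

lemma sum_ratio_le_geometric:
  fixes RR :: "nat \<Rightarrow> real"
  assumes J: "finite J" and n: "n \<in> J" and a: "a > 0" and g: "\<gamma> > 1"
    and up: "\<And>m. m \<in> J \<Longrightarrow> RR m \<le> b * \<gamma>^m" and R0: "\<And>m. m \<in> J \<Longrightarrow> RR m \<ge> 0"
    and low: "a * \<gamma>^n \<le> RR n"
  shows "(\<Sum>m\<in>{m\<in>J. m \<le> n}. RR m / RR n) \<le> (b/a) * (\<gamma>/(\<gamma>-1))"
proof -
  have gn: "\<gamma>^n > 0" using g by simp
  then have Rn: "RR n > 0" using low a by (smt (verit) mult_pos_pos)
  then have b: "b \<ge> 0" using up[OF n] gn by (smt (verit) mult_nonpos_nonneg)
  have "(\<Sum>m\<in>{m\<in>J. m \<le> n}. RR m / RR n) \<le> (\<Sum>m\<in>{m\<in>J. m \<le> n}. b * \<gamma>^m / (a * \<gamma>^n))"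
  proof (rule sum_mono)
    fix m assume m: "m \<in> {m\<in>J. m \<le> n}"
    have "RR m / RR n \<le> b * \<gamma>^m / RR n" using up m Rn by (simp add: divide_right_mono)
    also have "\<dots> \<le> b * \<gamma>^m / (a * \<gamma>^n)"
      using b g a gn low Rn by (intro divide_left_mono) auto
    finally show "RR m / RR n \<le> b * \<gamma>^m / (a * \<gamma>^n)" .
  qed
  also have "\<dots> \<le> (\<Sum>m<Suc n. b * \<gamma>^m / (a * \<gamma>^n))"
    using b a g by (intro sum_mono2) auto
  also have "\<dots> = b / (a * \<gamma>^n) * (\<Sum>m<Suc n. \<gamma>^m)"
    unfolding sum_distrib_left by (intro sum.cong refl) simp
  also have "\<dots> = b / (a * \<gamma>^n) * ((\<gamma>^Suc n - 1) / (\<gamma> - 1))"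
    using g by (subst geometric_sum) auto
  also have "\<dots> \<le> b / (a * \<gamma>^n) * (\<gamma>^Suc n / (\<gamma> - 1))"
    using a b g gn by (intro mult_left_mono divide_right_mono) auto
  also have "\<dots> = (b/a) * (\<gamma>/(\<gamma>-1))"
    using gn a by (simp add: field_simps)
  finally show ?thesis .
qed

lemma sum_ordered_pairs_weights_le:
  fixes w RR :: "nat \<Rightarrow> real"
  assumes J: "finite J" and w0: "\<And>n. n \<in> J \<Longrightarrow> w n \<ge> 0" and K: "K \<ge> 0"
    and a: "a > 0" and g: "\<gamma> > 1"
    and up: "\<And>n. n \<in> J \<Longrightarrow> RR n \<le> b * \<gamma>^n" and low: "\<And>n. n \<in> J \<Longrightarrow> a * \<gamma>^n \<le> RR n"
  shows "(\<Sum>m\<in>J. \<Sum>n\<in>J. if m \<le> n then w m * w n / K + w n * RR m / RR n else 0)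
    \<le> (\<Sum>n\<in>J. w n)^2 / K + (b/a) * (\<gamma>/(\<gamma>-1)) * (\<Sum>n\<in>J. w n)"
proof -
  let ?C = "(b/a) * (\<gamma>/(\<gamma>-1))"
  have R0: "RR n \<ge> 0" if "n \<in> J" for n
    using low[OF that] a g by (smt (verit) mult_pos_pos zero_less_power)
  have "(\<Sum>m\<in>J. \<Sum>n\<in>J. if m \<le> n then w m * w n else 0) \<le> (\<Sum>m\<in>J. \<Sum>n\<in>J. w m * w n)"
    using w0 by (intro sum_mono) auto
  also have "\<dots> = (\<Sum>n\<in>J. w n)^2" by (simp add: power2_eq_square sum_product)
  finally have pairs: "(\<Sum>m\<in>J. \<Sum>n\<in>J. if m \<le> n then w m * w n else 0) \<le> (\<Sum>n\<in>J. w n)^2" .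
  have "(\<Sum>m\<in>J. \<Sum>n\<in>J. if m \<le> n then w n * RR m / RR n else 0)
      = (\<Sum>n\<in>J. w n * (\<Sum>m\<in>{m\<in>J. m \<le> n}. RR m / RR n))"
    using J by (subst sum.swap) (simp add: sum_distrib_left sum.If_cases Int_def conj_commute)
  also have "\<dots> \<le> (\<Sum>n\<in>J. w n * ?C)"
    using w0 J a g up R0 low by (intro sum_mono mult_left_mono sum_ratio_le_geometric) auto
  also have "\<dots> = ?C * (\<Sum>n\<in>J. w n)"
    using sum_distrib_right[of w J ?C] by (simp only: mult.commute)
  finally have ratios: "(\<Sum>m\<in>J. \<Sum>n\<in>J. if m \<le> n then w n * RR m / RR n else 0)
      \<le> ?C * (\<Sum>n\<in>J. w n)" .
  have "(\<Sum>m\<in>J. \<Sum>n\<in>J. if m \<le> n then w m * w n / K + w n * RR m / RR n else 0)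
      = (\<Sum>m\<in>J. \<Sum>n\<in>J. if m \<le> n then w m * w n else 0) / K
        + (\<Sum>m\<in>J. \<Sum>n\<in>J. if m \<le> n then w n * RR m / RR n else 0)"
  proof -
    have "(if P then x / K + y else 0) = (if P then x else 0) / K + (if P then y else 0)"
      for P and x y :: real
      by simp
    then show ?thesis by (simp only: sum.distrib sum_divide_distrib)
  qed
  also have "\<dots> \<le> (\<Sum>n\<in>J. w n)^2 / K + (b/a) * (\<gamma>/(\<gamma>-1)) * (\<Sum>n\<in>J. w n)"
    using pairs ratios K by (intro add_mono divide_right_mono)
  finally show ?thesis .
qed

lemma sum_measure_inter_separated_balls_le_weights:
  fixes S :: "nat \<Rightarrow> 'a::euclidean_space set" and w RR r \<rho> :: "nat \<Rightarrow> real"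
  assumes J: "finite J"
    and fin: "\<And>n. n \<in> J \<Longrightarrow> finite (S n)"
    and sep: "\<And>n. n \<in> J \<Longrightarrow> separated (\<rho> n) (S n)" and rho: "\<And>n. n \<in> J \<Longrightarrow> \<rho> n > 0"
    and r: "\<And>n. n \<in> J \<Longrightarrow> 0 \<le> r n" "\<And>n. n \<in> J \<Longrightarrow> r n \<le> \<rho> n / 2"
    and r_pow: "\<And>n. n \<in> J \<Longrightarrow> r n ^ DIM('a) = w n / RR n"
    and rho_pow: "\<And>n. n \<in> J \<Longrightarrow> \<rho> n ^ DIM('a) = s ^ DIM('a) / RR n"
    and card_le: "\<And>n. n \<in> J \<Longrightarrow> real (card (S n)) \<le> RR n"
    and w0: "\<And>n. n \<in> J \<Longrightarrow> w n \<ge> 0"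
    and up: "\<And>n. n \<in> J \<Longrightarrow> RR n \<le> b * \<gamma>^n" and low: "\<And>n. n \<in> J \<Longrightarrow> a * \<gamma>^n \<le> RR n"
    and a: "a > 0" and g: "\<gamma> > 1" and s: "s > 0"
  shows "(\<Sum>p\<in>Sigma J S. \<Sum>q\<in>Sigma J S.
            measure lebesgue (ball (snd p) (r (fst p)) \<inter> ball (snd q) (r (fst q))))
    \<le> 2 * unit_ball_vol DIM('a) * 4 ^ DIM('a) *
        ((\<Sum>n\<in>J. w n)^2 / s ^ DIM('a) + (b/a) * (\<gamma>/(\<gamma>-1)) * (\<Sum>n\<in>J. w n))"
proof -
  let ?d = "DIM('a)" and ?v = "unit_ball_vol DIM('a)"
  have sd: "s ^ ?d > 0" using s by simp
  have RR: "RR n > 0" if "n \<in> J" for n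
    using low[OF that] a g by (smt (verit) mult_pos_pos zero_less_power)
  have "(\<Sum>p\<in>Sigma J S. \<Sum>q\<in>Sigma J S.
            measure lebesgue (ball (snd p) (r (fst p)) \<inter> ball (snd q) (r (fst q))))
      \<le> 2 * (\<Sum>m\<in>J. \<Sum>n\<in>J. if m \<le> n then real (card (S m)) * (?v * r n ^ ?d)
                                       * (4 ^ ?d * (r m ^ ?d / \<rho> n ^ ?d + 1)) else 0)"
    using J fin sep rho r by (rule sum_measure_inter_separated_balls_le)
  also have "\<dots> \<le> 2 * (\<Sum>m\<in>J. \<Sum>n\<in>J. ?v * 4 ^ ?d *
                   (if m \<le> n then w m * w n / s ^ ?d + w n * RR m / RR n else 0))"
  proof (intro mult_left_mono sum_mono)
    fix m n assume mn: "m \<in> J" "n \<in> J"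
    have "real (card (S m)) * (?v * r n ^ ?d) * (4 ^ ?d * (r m ^ ?d / \<rho> n ^ ?d + 1))
        \<le> RR m * (?v * r n ^ ?d) * (4 ^ ?d * (r m ^ ?d / \<rho> n ^ ?d + 1))"
      using card_le mn r rho by (intro mult_right_mono mult_nonneg_nonneg add_nonneg_nonneg divide_nonneg_nonneg)
        (auto intro: less_imp_le)
    also have "\<dots> = ?v * 4 ^ ?d * (w m * w n / s ^ ?d + w n * RR m / RR n)"
      unfolding r_pow[OF mn(1)] r_pow[OF mn(2)] rho_pow[OF mn(2)]
      using RR[OF mn(1)] RR[OF mn(2)] sd by (simp add: field_simps)
    finally show "(if m \<le> n then real (card (S m)) * (?v * r n ^ ?d) * (4 ^ ?d * (r m ^ ?d / \<rho> n ^ ?d + 1)) else 0)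
        \<le> ?v * 4 ^ ?d * (if m \<le> n then w m * w n / s ^ ?d + w n * RR m / RR n else 0)"
      by simp
  qed simp
  also have "\<dots> = 2 * ?v * 4 ^ ?d *
      (\<Sum>m\<in>J. \<Sum>n\<in>J. if m \<le> n then w m * w n / s ^ ?d + w n * RR m / RR n else 0)"
    by (simp add: sum_distrib_left mult.assoc)
  also have "\<dots> \<le> 2 * ?v * 4 ^ ?d * ((\<Sum>n\<in>J. w n)^2 / s ^ ?d + (b/a) * (\<gamma>/(\<gamma>-1)) * (\<Sum>n\<in>J. w n))"
    using J w0 sd a g up low by (intro mult_left_mono sum_ordered_pairs_weights_le) auto
  finally show ?thesis .
qed

lemma measure_union_separated_balls_ge:
  fixes S :: "nat \<Rightarrow> 'a::euclidean_space set" and w RR r \<rho> :: "nat \<Rightarrow> real"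
  assumes J: "finite J"
    and fin: "\<And>n. n \<in> J \<Longrightarrow> finite (S n)"
    and sep: "\<And>n. n \<in> J \<Longrightarrow> separated (\<rho> n) (S n)" and rho: "\<And>n. n \<in> J \<Longrightarrow> \<rho> n > 0"
    and r: "\<And>n. n \<in> J \<Longrightarrow> 0 \<le> r n" "\<And>n. n \<in> J \<Longrightarrow> r n \<le> \<rho> n / 2"
    and r_pow: "\<And>n. n \<in> J \<Longrightarrow> r n ^ DIM('a) = w n / RR n"
    and rho_pow: "\<And>n. n \<in> J \<Longrightarrow> \<rho> n ^ DIM('a) = s ^ DIM('a) / RR n"
    and card_le: "\<And>n. n \<in> J \<Longrightarrow> real (card (S n)) \<le> RR n"
    and card_ge: "\<And>n. n \<in> J \<Longrightarrow> c * w n \<le> real (card (S n)) * r n ^ DIM('a)"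
    and w0: "\<And>n. n \<in> J \<Longrightarrow> w n \<ge> 0"
    and up: "\<And>n. n \<in> J \<Longrightarrow> RR n \<le> b * \<gamma>^n" and low: "\<And>n. n \<in> J \<Longrightarrow> a * \<gamma>^n \<le> RR n"
    and a: "a > 0" and g: "\<gamma> > 1" and s: "s > 0" and c: "c > 0"
    and large: "(b/a) * (\<gamma>/(\<gamma>-1)) * s ^ DIM('a) \<le> (\<Sum>n\<in>J. w n)" and pos: "0 < (\<Sum>n\<in>J. w n)"
  shows "c^2 * unit_ball_vol DIM('a) * s ^ DIM('a) / 4 ^ (DIM('a) + 1)
    \<le> measure lebesgue (\<Union>n\<in>J. \<Union>y\<in>S n. ball y (r n))"
proof -
  let ?d = "DIM('a)" and ?v = "unit_ball_vol DIM('a)"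
  define H where "H = (\<Sum>n\<in>J. w n)"
  define B where "B p = ball (snd p) (r (fst p))" for p :: "nat \<times> 'a"
  define A where "A = (\<Sum>p\<in>Sigma J S. measure lebesgue (B p))"
  define Q where "Q = (\<Sum>p\<in>Sigma J S. \<Sum>q\<in>Sigma J S. measure lebesgue (B p \<inter> B q))"
  define U where "U = measure lebesgue (\<Union>n\<in>J. \<Union>y\<in>S n. ball y (r n))"
  have v: "?v > 0" by simp
  have sd: "s ^ ?d > 0" using s by simp
  have "A = (\<Sum>p\<in>Sigma J S. ?v * r (fst p) ^ ?d)"
    unfolding A_def B_def using r by (intro sum.cong refl measure_lebesgue_ball) auto
  also have "\<dots> = (\<Sum>n\<in>J. \<Sum>y\<in>S n. ?v * r n ^ ?d)"
    using J fin by (subst sum.Sigma) (auto simp: split_def)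
  also have "\<dots> \<ge> (\<Sum>n\<in>J. ?v * (c * w n))"
    using card_ge v by (intro sum_mono) (simp add: mult.commute)
  also have "(\<Sum>n\<in>J. ?v * (c * w n)) = c * ?v * H"
    unfolding H_def sum_distrib_left by (simp add: mult_ac)
  finally have A_ge: "c * ?v * H \<le> A" .
  have "Q \<le> 2 * ?v * 4 ^ ?d * (H^2 / s ^ ?d + (b/a) * (\<gamma>/(\<gamma>-1)) * H)"
    unfolding Q_def B_def H_def using J fin sep rho r r_pow rho_pow card_le w0 up low a g s
    by (rule sum_measure_inter_separated_balls_le_weights)
  also have "\<dots> \<le> 2 * ?v * 4 ^ ?d * (2 * H^2 / s ^ ?d)"
  proof -
    have "(b/a) * (\<gamma>/(\<gamma>-1)) * H \<le> H / s ^ ?d * H"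
      using large pos sd unfolding H_def by (intro mult_right_mono) (auto simp: pos_le_divide_eq)
    then show ?thesis by (intro mult_left_mono) (auto simp: power2_eq_square)
  qed
  finally have Q_le: "Q \<le> 4 * ?v * 4 ^ ?d * H^2 / s ^ ?d" by simp
  have "(\<Union>p\<in>Sigma J S. B p) = (\<Union>n\<in>J. \<Union>y\<in>S n. ball y (r n))"
    unfolding B_def by force
  moreover have "A^2 \<le> Q * measure lebesgue (\<Union>p\<in>Sigma J S. B p)"
    unfolding A_def Q_def using J fin by (intro sum_measure_squared_le) (auto simp: B_def)
  ultimately have "A^2 \<le> Q * U" by (simp add: U_def)
  moreover have "(c * ?v * H)^2 \<le> A^2"
    using A_ge c v pos by (intro power_mono) (auto simp: H_def)
  moreover have "Q * U \<le> 4 * ?v * 4 ^ ?d * H^2 / s ^ ?d * U"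
    using Q_le by (intro mult_right_mono) (auto simp: U_def)
  ultimately have "(c * ?v * H)^2 \<le> (4 * ?v * 4 ^ ?d * H^2 / s ^ ?d) * U" by linarith
  moreover have "c^2 * ?v * s ^ ?d / 4 ^ (?d + 1) = (c * ?v * H)^2 / (4 * ?v * 4 ^ ?d * H^2 / s ^ ?d)"
    using pos v sd unfolding H_def by (simp add: field_simps power2_eq_square)
  moreover have "4 * ?v * 4 ^ ?d * H^2 / s ^ ?d > 0" using pos v sd by (simp add: H_def)
  ultimately have "c^2 * ?v * s ^ ?d / 4 ^ (?d + 1) \<le> U"
    by (simp only: pos_divide_le_eq mult.commute)
  then show ?thesis unfolding U_def .
qed

section \<open>Limsup sets\<close>

lemma limsup_set_eq_INT_UN:
  fixes E :: "nat \<Rightarrow> 'a set"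
  shows "{x\<in>space M. \<exists>\<^sub>\<infinity>n. x \<in> E n} = space M \<inter> (\<Inter>m. \<Union>n\<in>{m..}. E n)"
  unfolding INFM_nat_le by auto

lemma sets_limsup:
  fixes E :: "nat \<Rightarrow> 'a set"
  assumes "\<And>n. E n \<in> sets M"
  shows "{x\<in>space M. \<exists>\<^sub>\<infinity>n. x \<in> E n} \<in> sets M"
proof -
  have "(\<Union>n\<in>{m..}. E n) \<in> sets M" for m using assms by (intro sets.countable_UN') auto
  then show ?thesis unfolding limsup_set_eq_INT_UN by (intro sets.Int sets.top sets.countable_INT) auto
qed

lemma emeasure_limsup_ge:
  fixes E :: "nat \<Rightarrow> 'a set"
  assumes E: "\<And>n. E n \<in> sets M" and fin: "emeasure M (\<Union>n\<in>{N0..}. E n) \<noteq> \<infinity>"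
    and ge: "\<And>m. m \<ge> N0 \<Longrightarrow> \<delta> \<le> emeasure M (\<Union>n\<in>{m..}. E n)"
  shows "\<delta> \<le> emeasure M {x\<in>space M. \<exists>\<^sub>\<infinity>n. x \<in> E n}"
proof -
  define F where "F m = (\<Union>n\<in>{m..}. E n)" for m
  have F: "F m \<in> sets M" for m unfolding F_def using E by auto
  have "emeasure M (\<Inter>m\<in>{N0..}. F m) = (INF m\<in>{N0..}. emeasure M (F m))"
  proof (rule emeasure_INT_decseq_subset)
    show "emeasure M (F m) \<noteq> \<infinity>" if "m \<in> {N0..}" for m
    proof -
      have "F m \<subseteq> F N0" using that unfolding F_def by (intro UN_mono) auto
      then have "emeasure M (F m) \<le> emeasure M (F N0)" using F by (rule emeasure_mono)
      then show ?thesis using fin by (auto simp: F_def top_unique)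
    qed
    show "F j \<subseteq> F i" if "i \<le> j" for i j using that unfolding F_def by (intro UN_mono) auto
  qed (use F in auto)
  also have "\<dots> \<ge> \<delta>" using ge by (auto simp: F_def intro: INF_greatest)
  also have "(\<Inter>m\<in>{N0..}. F m) \<subseteq> {x\<in>space M. \<exists>\<^sub>\<infinity>n. x \<in> E n}"
  proof
    fix x assume x: "x \<in> (\<Inter>m\<in>{N0..}. F m)"
    have "\<exists>n\<ge>m. x \<in> E n" for m using x[THEN INT_D, of "max m N0"] by (auto simp: F_def)
    then show "x \<in> {x\<in>space M. \<exists>\<^sub>\<infinity>n. x \<in> E n}"
      using sets.sets_into_space[OF E] by (auto simp: INFM_nat_le)
  qed
  then have "emeasure M (\<Inter>m\<in>{N0..}. F m) \<le> emeasure M {x\<in>space M. \<exists>\<^sub>\<infinity>n. x \<in> E n}"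
    by (intro emeasure_mono sets_limsup E)
  finally show ?thesis .
qed

lemma emeasure_limsup_balls_mono:
  fixes C D :: "nat \<Rightarrow> 'a::euclidean_space set" and r r' :: "nat \<Rightarrow> real"
  assumes "\<And>n. C n \<subseteq> D n" and "\<And>n. r n \<le> r' n"
  shows "emeasure lebesgue {x. \<exists>\<^sub>\<infinity>n. x \<in> (\<Union>y\<in>C n. ball y (r n))}
    \<le> emeasure lebesgue {x. \<exists>\<^sub>\<infinity>n. x \<in> (\<Union>y\<in>D n. ball y (r' n))}"
proof (rule emeasure_mono)
  have "(\<Union>y\<in>C n. ball y (r n)) \<subseteq> (\<Union>y\<in>D n. ball y (r' n))" for n
    using assms by (intro UN_mono subset_ball) auto
  then show "{x. \<exists>\<^sub>\<infinity>n. x \<in> (\<Union>y\<in>C n. ball y (r n))} \<subseteq> {x. \<exists>\<^sub>\<infinity>n. x \<in> (\<Union>y\<in>D n. ball y (r' n))}"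
    by (intro Collect_mono impI) (erule frequently_elim1, blast)
  have "(\<Union>y\<in>D n. ball y (r' n)) \<in> sets lebesgue" for n
  proof -
    have "open (\<Union>y\<in>D n. ball y (r' n))" by auto
    then show ?thesis by (simp add: borel_open)
  qed
  then show "{x. \<exists>\<^sub>\<infinity>n. x \<in> (\<Union>y\<in>D n. ball y (r' n))} \<in> sets lebesgue"
    using sets_limsup[of "\<lambda>n. \<Union>y\<in>D n. ball y (r' n)" lebesgue] by simp
qed

section \<open>Balls around separated sets at infinitely many levels\<close>

lemma separation_ball_radius_bounds:
  fixes R d :: nat and s w :: real
  defines "\<rho> \<equiv> s * real R powr (-1 / real d)" and "r \<equiv> (w / real R) powr (1 / real d)"
  assumes d: "d > 0" and R: "R > 0" and s: "s > 0" and w: "0 \<le> w" "w \<le> (s/2) ^ d"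
  shows "\<rho> ^ d = s ^ d / real R" "r ^ d = w / real R" "0 < \<rho>" "\<rho> \<le> s" "0 \<le> r" "r \<le> \<rho> / 2"
proof -
  show rho_pow: "\<rho> ^ d = s ^ d / real R"
    unfolding \<rho>_def power_mult_distrib using d R by (simp add: powr_power powr_neg_one)
  show r_pow: "r ^ d = w / real R"
    unfolding r_def using d w by (simp add: powr_inverse_root)
  show "0 < \<rho>" unfolding \<rho>_def using s R by simp
  have "real R powr (-1 / real d) \<le> real R powr 0"
    using R by (intro powr_mono) auto
  then show "\<rho> \<le> s" unfolding \<rho>_def using s R by simp
  show "0 \<le> r" unfolding r_def by simp
  have "r ^ d \<le> (s/2) ^ d / real R"
    unfolding r_pow using w R by (intro divide_right_mono) auto
  also have "\<dots> = (\<rho> / 2) ^ d" using rho_pow by (simp add: power_divide)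
  finally show "r \<le> \<rho> / 2"
    using power_mono_iff[of r "\<rho> / 2" d] \<open>0 \<le> r\<close> \<open>0 < \<rho>\<close> d by simp
qed

lemma bounded_UN_balls:
  fixes S :: "nat \<Rightarrow> 'a::real_normed_vector set"
  assumes "bounded (\<Union>n. S n)" and r: "\<And>n. n \<in> I \<Longrightarrow> r n \<le> K"
  shows "bounded (\<Union>n\<in>I. \<Union>y\<in>S n. ball y (r n))"
proof -
  obtain B where B: "\<And>y. y \<in> (\<Union>n. S n) \<Longrightarrow> norm y \<le> B"
    using assms(1) unfolding bounded_iff by blast
  have "(\<Union>n\<in>I. \<Union>y\<in>S n. ball y (r n)) \<subseteq> cball 0 (B + K)"
  proof
    fix x assume "x \<in> (\<Union>n\<in>I. \<Union>y\<in>S n. ball y (r n))"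
    then obtain n y where "n \<in> I" "y \<in> S n" "dist y x < r n" by auto
    moreover have "norm x \<le> norm y + dist y x" by (metis dist_norm norm_triangle_sub dist_commute)
    ultimately show "x \<in> cball 0 (B + K)" using B r by force
  qed
  then show ?thesis by (rule bounded_subset[OF bounded_cball])
qed

lemma not_summable_tail_sum_gt:
  fixes g :: "nat \<Rightarrow> real"
  assumes g0: "\<And>n. g n \<ge> 0" and ns: "\<not> summable g"
  shows "\<exists>N. K < (\<Sum>n\<in>{M..<N}. g n)"
proof (rule ccontr)
  assume "\<not> ?thesis"
  then have le: "(\<Sum>n\<in>{M..<N}. g n) \<le> K" for N by (simp add: not_less)
  have "(\<Sum>n<N. g n) \<le> (\<Sum>n<M. g n) + K" for N
  proof (cases "N \<le> M")
    case True
    then have "(\<Sum>n<N. g n) \<le> (\<Sum>n<M. g n)" using g0 by (intro sum_mono2) auto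
    moreover have "K \<ge> 0" using le[of 0] by simp
    ultimately show ?thesis by simp
  next
    case False
    then have "(\<Sum>n<N. g n) = (\<Sum>n<M. g n) + (\<Sum>n\<in>{M..<N}. g n)"
      by (metis linorder_not_le order.strict_implies_order sum.atLeastLessThan_concat lessThan_atLeast0 le0)
    then show ?thesis using le[of N] by simp
  qed
  then have "summable g" using g0 by (intro summableI_nonneg_bounded) auto
  then show False using ns by simp
qed

lemma emeasure_limsup_separated_balls_pos:
  fixes S :: "nat \<Rightarrow> 'a::euclidean_space set" and w :: "nat \<Rightarrow> real" and R :: "nat \<Rightarrow> nat"
  assumes bdd: "bounded (\<Union>n. S n)" and fin: "\<And>n. finite (S n)"
    and sep: "\<And>n. separated (s * real (R n) powr (-1 / real DIM('a))) (S n)"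
    and card_le: "\<And>n. card (S n) \<le> R n"
    and card_ge: "\<And>n. w n \<noteq> 0 \<Longrightarrow> c * real (R n) \<le> real (card (S n))"
    and w0: "\<And>n. 0 \<le> w n" and w_le: "\<And>n. w n \<le> (s/2) ^ DIM('a)" and div: "\<not> summable w"
    and growth: "\<And>n. n \<ge> N0 \<Longrightarrow> a * \<gamma>^n \<le> real (R n) \<and> real (R n) \<le> b * \<gamma>^n"
    and a: "a > 0" and g: "\<gamma> > 1" and s: "s > 0" and c: "c > 0"
  shows "0 < emeasure lebesgue
    {x. \<exists>\<^sub>\<infinity>n. x \<in> (\<Union>y\<in>S n. ball y ((w n / real (R n)) powr (1 / real DIM('a))))}"
proof -
  let ?d = "DIM('a)"
  define \<rho> where "\<rho> n = s * real (R n) powr (-1 / real ?d)" for n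
  define r where "r n = (w n / real (R n)) powr (1 / real ?d)" for n
  define E where "E n = (\<Union>y\<in>S n. ball y (r n))" for n
  define \<delta> where "\<delta> = c^2 * unit_ball_vol ?d * s ^ ?d / 4 ^ (?d + 1)"
  have R: "R n > 0" if "n \<ge> N0" for n
  proof -
    have "0 < a * \<gamma>^n" using a g by simp
    then show ?thesis using growth[OF that] by auto
  qed
  have rho_pow: "\<rho> n ^ ?d = s ^ ?d / real (R n)" and r_pow: "r n ^ ?d = w n / real (R n)"
    and rho: "0 < \<rho> n" "\<rho> n \<le> s" and r: "0 \<le> r n" "r n \<le> \<rho> n / 2" if "n \<ge> N0" for n
    unfolding \<rho>_def r_def
    using separation_ball_radius_bounds[where R="R n" and d="?d" and s=s and w="w n"] R[OF that] s w0[of n] w_le[of n] by simp_all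
  have first_moment: "c * w n \<le> real (card (S n)) * r n ^ ?d" if "n \<ge> N0" for n
  proof (cases "w n = 0")
    case False
    have "c * w n = c * real (R n) * (w n / real (R n))" using R[OF that] by simp
    also have "\<dots> \<le> real (card (S n)) * r n ^ ?d"
      unfolding r_pow[OF that] using card_ge[OF False] w0[of n] R[OF that] by (intro mult_right_mono) auto
    finally show ?thesis .
  qed (use r[OF that] in simp)
  have tail_bounded: "bounded (\<Union>n\<in>{N0..}. E n)"
  proof (unfold E_def, rule bounded_UN_balls[OF bdd])
    show "r n \<le> s" if "n \<in> {N0..}" for n
    proof -
      from that have n: "N0 \<le> n" by simp
      show ?thesis using r(2)[OF n] rho[OF n] by linarith
    qed
  qed
  have tail_lmeasurable: "(\<Union>n\<in>{M..}. E n) \<in> lmeasurable" if "M \<ge> N0" for M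
  proof -
    have "(\<Union>n\<in>{M..}. E n) \<subseteq> (\<Union>n\<in>{N0..}. E n)" using that by (intro UN_mono) auto
    then show ?thesis using bounded_subset[OF tail_bounded] by (intro lmeasurable_open) (auto simp: E_def)
  qed
  have tail_ge: "ennreal \<delta> \<le> emeasure lebesgue (\<Union>n\<in>{M..}. E n)" if M: "M \<ge> N0" for M
  proof -
    have "0 < b * \<gamma>^N0" using growth[of N0] R[of N0] by simp
    then have b: "b > 0" using g by (simp add: zero_less_mult_iff)
    obtain N where N: "(b/a) * (\<gamma>/(\<gamma>-1)) * s ^ ?d < (\<Sum>n\<in>{M..<N}. w n)"
      using not_summable_tail_sum_gt[OF w0 div] by blast
    moreover have "0 \<le> (b/a) * (\<gamma>/(\<gamma>-1)) * s ^ ?d" using a b g s by simp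
    ultimately have "\<delta> \<le> measure lebesgue (\<Union>n\<in>{M..<N}. E n)"
      unfolding \<delta>_def E_def
      using M fin sep[folded \<rho>_def] card_le first_moment w0 growth rho r r_pow rho_pow a g s c
      by (intro measure_union_separated_balls_ge[where RR="\<lambda>n. real (R n)" and \<rho>=\<rho> and r=r and w=w
            and a=a and b=b and \<gamma>=\<gamma> and s=s and c=c])
         auto
    also have "\<dots> \<le> measure lebesgue (\<Union>n\<in>{M..}. E n)"
    proof (rule measure_mono_fmeasurable)
      have "open (\<Union>n\<in>{M..<N}. E n)" by (auto simp: E_def)
      then show "(\<Union>n\<in>{M..<N}. E n) \<in> sets lebesgue" by (simp add: borel_open)
    qed (use tail_lmeasurable[OF M] in auto)
    finally show ?thesis
      using tail_lmeasurable[OF M] by (simp add: emeasure_eq_measure2)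
  qed
  have "E n \<in> sets lebesgue" for n
  proof -
    have "open (E n)" by (auto simp: E_def)
    then show ?thesis by (simp add: borel_open)
  qed
  then have "ennreal \<delta> \<le> emeasure lebesgue {x\<in>space lebesgue. \<exists>\<^sub>\<infinity>n. x \<in> E n}"
    using tail_lmeasurable[OF order.refl] tail_ge
    by (intro emeasure_limsup_ge[of E lebesgue N0]) (auto simp: emeasure_eq_measure2)
  moreover have "0 < \<delta>" unfolding \<delta>_def using c s by simp
  ultimately have "0 < emeasure lebesgue {x\<in>space lebesgue. \<exists>\<^sub>\<infinity>n. x \<in> E n}"
    using order.strict_trans2 ennreal_less_zero_iff by blast
  then show ?thesis unfolding E_def r_def by simp
qed

section \<open>Separated subsets of the sample sets\<close>

lemma Tsep_attained:
  assumes "finite Y"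
  obtains T where "T \<subseteq> Y" "separated r T" "card T = Tsep Y r"
proof -
  let ?C = "{card T | T. T \<subseteq> Y \<and> separated r T}"
  have "?C \<subseteq> card ` Pow Y" by auto
  then have "finite ?C" using assms by (meson finite_Pow_iff finite_imageI finite_subset)
  moreover have "0 \<in> ?C" by (auto simp: separated_def intro!: exI[of _ "{}"])
  ultimately have "Max ?C \<in> ?C" by (intro Max_in) auto
  then show ?thesis using that unfolding Tsep_def by auto
qed

lemma Bset_separated_subsets:
  fixes f :: "nat \<Rightarrow> nat \<Rightarrow> 'a \<Rightarrow> 'b::euclidean_space"
  assumes c: "c \<ge> 0"
  obtains T where "\<And>n. T n \<subseteq> Yset f R n \<omega>"
    "\<And>n. separated (s * real (R n) powr (-1 / real DIM('b))) (T n)"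
    "\<And>n. \<omega> \<in> Bset f R c s n \<Longrightarrow> c * real (R n) < real (card (T n))"
proof -
  define \<rho> where "\<rho> n = s * real (R n) powr (-1 / real DIM('b))" for n
  define P where "P n T \<longleftrightarrow> T \<subseteq> Yset f R n \<omega> \<and> separated (\<rho> n) T \<and> card T = Tsep (Yset f R n \<omega>) (\<rho> n)"
    for n T
  have "\<exists>T. P n T" for n
  proof -
    have "finite (Yset f R n \<omega>)" by (simp add: Yset_def)
    then obtain T where "T \<subseteq> Yset f R n \<omega>" "separated (\<rho> n) T" "card T = Tsep (Yset f R n \<omega>) (\<rho> n)"
      by (rule Tsep_attained)
    then show ?thesis unfolding P_def by blast
  qed
  define T where "T n = (SOME T. P n T)" for n
  have T: "P n (T n)" for n
    unfolding T_def using \<open>\<exists>T. P n T\<close> by (rule someI_ex)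
  have "c * real (R n) < real (card (T n))" if B: "\<omega> \<in> Bset f R c s n" for n
  proof -
    have "c < real (card (T n)) / real (R n)" using B T[of n] by (simp add: Bset_def P_def \<rho>_def)
    moreover from this have "R n > 0" using c by (cases "R n = 0") auto
    ultimately show ?thesis by (simp add: pos_less_divide_eq)
  qed
  moreover have "T n \<subseteq> Yset f R n \<omega>" "separated (\<rho> n) (T n)" for n
    using T[of n] by (simp_all add: P_def)
  ultimately show ?thesis using that unfolding \<rho>_def by blast
qed

lemma not_summable_min_const:
  fixes g :: "nat \<Rightarrow> real"
  assumes ns: "\<not> summable g" and \<epsilon>: "\<epsilon> > 0"
  shows "\<not> summable (\<lambda>n. min (g n) \<epsilon>)"
proof
  assume "summable (\<lambda>n. min (g n) \<epsilon>)"
  moreover from this have "eventually (\<lambda>n. min (g n) \<epsilon> < \<epsilon>) sequentially"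
    using \<epsilon> by (auto dest: summable_LIMSEQ_zero order_tendstoD(2))
  then have "eventually (\<lambda>n. min (g n) \<epsilon> = g n) sequentially"
    by (rule eventually_mono) (simp add: min_def split: if_splits)
  ultimately have "summable g" using summable_cong by fastforce
  then show False using ns by simp
qed

lemma bigtheta_power_bounds:
  fixes R :: "nat \<Rightarrow> nat"
  assumes "(\<lambda>n. real (R n)) \<in> \<Theta>(\<lambda>n. \<gamma> ^ n)" and "\<gamma> > 0"
  obtains a b N where "a > 0" "\<And>n. n \<ge> N \<Longrightarrow> a * \<gamma>^n \<le> real (R n) \<and> real (R n) \<le> b * \<gamma>^n"
proof -
  obtain b where b: "eventually (\<lambda>n. norm (real (R n)) \<le> b * norm (\<gamma>^n)) at_top"
    using landau_o.bigE[OF bigthetaD1[OF assms(1)]] by blast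
  obtain a where a: "a > 0" and a': "eventually (\<lambda>n. norm (real (R n)) \<ge> a * norm (\<gamma>^n)) at_top"
    using landau_omega.bigE[OF bigthetaD2[OF assms(1)]] by blast
  from eventually_conj[OF a' b] obtain N where
    "\<And>n. n \<ge> N \<Longrightarrow> a * norm (\<gamma>^n) \<le> norm (real (R n)) \<and> norm (real (R n)) \<le> b * norm (\<gamma>^n)"
    unfolding eventually_at_top_linorder by blast
  then show ?thesis using that[OF a] assms(2) by auto
qed

theorem mainTheorem12:
  fixes f :: "nat \<Rightarrow> nat \<Rightarrow> 'a::metric_space \<Rightarrow> 'b::euclidean_space"
    and R :: "nat \<Rightarrow> nat" and X :: "'b set" and \<omega> :: 'a
    and h :: "nat \<Rightarrow> real" and \<gamma> c s :: real
  assumes X: "compact X"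
    and cont: "\<And>l n. l \<in> {1..R n} \<Longrightarrow> continuous_on UNIV (f l n)"
    and into: "\<And>l n \<omega>'. l \<in> {1..R n} \<Longrightarrow> f l n \<omega>' \<in> X"
    and h_nonneg: "\<And>n. h n \<ge> 0"
    and gamma: "\<gamma> > 1"
    and R_asymp: "(\<lambda>n. real (R n)) \<in> \<Theta>(\<lambda>n. \<gamma> ^ n)"
    and c: "c > 0" and s: "s > 0"
    and div: "\<not> summable (\<lambda>n. if \<omega> \<in> Bset f R c s n then h n else 0)"
  shows "emeasure lebesgue
           {x. \<exists>\<^sub>\<infinity>n. x \<in> (\<Union>l\<in>{1..R n}. ball (f l n \<omega>) ((h n / real (R n)) powr (1 / real DIM('b))))} > 0"
proof -
  let ?d = "DIM('b)" and ?\<epsilon> = "(s/2) ^ DIM('b)"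
  obtain a b N0 where a: "a > 0" and growth: "\<And>n. n \<ge> N0 \<Longrightarrow> a * \<gamma>^n \<le> real (R n) \<and> real (R n) \<le> b * \<gamma>^n"
    using bigtheta_power_bounds[OF R_asymp] gamma by (metis less_trans zero_less_one)
  from c have "c \<ge> 0" by simp
  then obtain T where T_Y: "\<And>n. T n \<subseteq> Yset f R n \<omega>"
    and T_sep: "\<And>n. separated (s * real (R n) powr (-1 / real ?d)) (T n)"
    and T_card: "\<And>n. \<omega> \<in> Bset f R c s n \<Longrightarrow> c * real (R n) < real (card (T n))"
    using Bset_separated_subsets[where f=f and R=R and \<omega>=\<omega> and s=s] by blast
  \<comment> \<open>capping h at (s/2)^d keeps the radius (w n / R n)^(1/d) below half the separation\<close>
  define w where "w n = (if N0 \<le> n \<and> \<omega> \<in> Bset f R c s n then min (h n) ?\<epsilon> else 0)" for n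
  have Y: "finite (Yset f R n \<omega>)" "card (Yset f R n \<omega>) \<le> R n" for n
    using card_image_le[of "{1..R n}" "\<lambda>l. f l n \<omega>"] by (simp_all add: Yset_def)
  have "0 < emeasure lebesgue {x. \<exists>\<^sub>\<infinity>n. x \<in> (\<Union>y\<in>T n. ball y ((w n / real (R n)) powr (1 / real ?d)))}"
  proof (rule emeasure_limsup_separated_balls_pos[OF _ _ T_sep _ _ _ _ _ growth a gamma s c])
    show "bounded (\<Union>n. T n)"
      using T_Y into by (intro bounded_subset[OF compact_imp_bounded[OF X]]) (force simp: Yset_def)
    show "finite (T n)" "card (T n) \<le> R n" for n
      using finite_subset[OF T_Y Y(1)] card_mono[OF Y(1) T_Y, of n] Y(2)[of n] by simp_all
    show "c * real (R n) \<le> real (card (T n))" if "w n \<noteq> 0" for n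
      using that T_card[of n] by (auto simp: w_def split: if_splits)
    show "0 \<le> w n" "w n \<le> ?\<epsilon>" for n
      using h_nonneg s by (auto simp: w_def)
    have "eventually (\<lambda>n. w n = min (if \<omega> \<in> Bset f R c s n then h n else 0) ?\<epsilon>) sequentially"
      using eventually_ge_at_top[of N0] by eventually_elim (use s in \<open>auto simp: w_def\<close>)
    then show "\<not> summable w"
      using not_summable_min_const[OF div] s summable_cong by fastforce
  qed
  also have "\<dots> \<le> emeasure lebesgue
      {x. \<exists>\<^sub>\<infinity>n. x \<in> (\<Union>y\<in>Yset f R n \<omega>. ball y ((h n / real (R n)) powr (1 / real ?d)))}"
  proof (rule emeasure_limsup_balls_mono[OF T_Y])
    show "(w n / real (R n)) powr (1 / real ?d) \<le> (h n / real (R n)) powr (1 / real ?d)" for n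
      using h_nonneg s by (intro powr_mono2 divide_right_mono) (auto simp: w_def)
  qed
  finally show ?thesis by (simp add: Yset_def)
qed

end
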